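(* Let $\theta,\eta\in(0,\tfrac{\pi}{4}]$, and let the four qubits $A,C_1,C_2,B$ be in the state $|\Phi_\theta\rangle_{AC_1}\otimes|\Phi_\eta\rangle_{C_2B}$. Let $|\varphi\rangle\in\mathbb{C}^2\otimes\mathbb{C}^2$ be a unit vector on Clare's system $C_1C_2$ such that, conditioned on Clare's system being projected onto $|\varphi\rangle$, the resulting (normalized) state of Alice and Bob's qubits $AB$ is a maximally entangled two-qubit state, i.e. of the form $(U\otimes I)\tfrac{1}{\sqrt2}(|00\rangle+|11\rangle)$ for some $2\times2$ unitary $U$. Then the probability $p(\varphi)$ of this projection outcome satisfies $$\frac{\sin^2 2\theta\,\sin^2 2\eta}{4(1+\cos2\theta\cos2\eta)}\le p(\varphi)\le \frac{\sin^2 2\theta\,\sin^2 2\eta}{4(1-\cos2\theta\cos2\eta)}.$$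
   Context: For $\lambda\in[0,\tfrac{\pi}{2}]$, $|\Phi_\lambda\rangle=\cos\lambda|00\rangle+\sin\lambda|11\rangle$. Alice holds qubit $A$, Clare holds qubits $C_1$ (entangled initially with $A$) and $C_2$ (entangled initially with $B$), Bob holds qubit $B$. The probability of projecting Clare's system onto $|\varphi\rangle$ is $p(\varphi)=\|(\langle\varphi|_{C_1C_2}\otimes I_{AB})|\Phi_\theta\rangle_{AC_1}|\Phi_\eta\rangle_{C_2B}\|^2$. *)

theory Defs
  imports Complex_Main
begin

(* Qubit computational basis indices are the naturals 0 and 1; a vector in C^2 (x) C^2
   is represented by its coefficient function on indices i,j < 2. *)

definition Phi :: "real \<Rightarrow> nat \<Rightarrow> nat \<Rightarrow> complex" where
  "Phi l i j = (if i = j then (if i = 0 then complex_of_real (cos l) else complex_of_real (sin l)) else 0)"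

definition state4 :: "real \<Rightarrow> real \<Rightarrow> nat \<Rightarrow> nat \<Rightarrow> nat \<Rightarrow> nat \<Rightarrow> complex" where
  "state4 th et a c1 c2 b = Phi th a c1 * Phi et c2 b"

text \<open>Unnormalized post-measurement AB state (<phi|_{C1C2} (x) I_AB) |state>, coefficient of |a b>.\<close>
definition post_AB :: "real \<Rightarrow> real \<Rightarrow> (nat \<Rightarrow> nat \<Rightarrow> complex) \<Rightarrow> nat \<Rightarrow> nat \<Rightarrow> complex" where
  "post_AB th et \<phi> a b = (\<Sum>c1<2. \<Sum>c2<2. cnj (\<phi> c1 c2) * state4 th et a c1 c2 b)"

definition prob :: "real \<Rightarrow> real \<Rightarrow> (nat \<Rightarrow> nat \<Rightarrow> complex) \<Rightarrow> real" where
  "prob th et \<phi> = (\<Sum>a<2. \<Sum>b<2. (cmod (post_AB th et \<phi> a b))\<^sup>2)"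

definition unit_vec2 :: "(nat \<Rightarrow> nat \<Rightarrow> complex) \<Rightarrow> bool" where
  "unit_vec2 \<phi> \<longleftrightarrow> (\<Sum>i<2. \<Sum>j<2. (cmod (\<phi> i j))\<^sup>2) = 1"

definition unitary2 :: "(nat \<Rightarrow> nat \<Rightarrow> complex) \<Rightarrow> bool" where
  "unitary2 U \<longleftrightarrow> (\<forall>i<2. \<forall>k<2. (\<Sum>j<2. U i j * cnj (U k j)) = (if i = k then 1 else 0))"

text \<open>Conditioned on outcome phi (which must have positive probability), the normalized
  AB state equals (U (x) I) (|00> + |11>)/sqrt 2 for some unitary U; the coefficient of
  |a b> of the latter is U a b / sqrt 2.\<close>
definition max_ent_outcome :: "real \<Rightarrow> real \<Rightarrow> (nat \<Rightarrow> nat \<Rightarrow> complex) \<Rightarrow> bool" where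
  "max_ent_outcome th et \<phi> \<longleftrightarrow> prob th et \<phi> > 0 \<and>
     (\<exists>U. unitary2 U \<and> (\<forall>a<2. \<forall>b<2.
        post_AB th et \<phi> a b / complex_of_real (sqrt (prob th et \<phi>)) = U a b / complex_of_real (sqrt 2)))"

end

theory Submission
  imports Defs
begin

text \<open>Writing \<open>c\<^sub>a\<close>, \<open>d\<^sub>b\<close> for the Schmidt coefficients of the two pairs, the outcome \<open>\<phi>\<close> leaves
  \<open>AB\<close> in the state with amplitudes \<open>cnj (\<phi> a b) c\<^sub>a d\<^sub>b\<close>. Maximal entanglement forces these to be
  \<open>\<surd>(p/2)\<close> times the entries of a unitary, whose squared moduli are \<open>x, 1 - x, 1 - x, x\<close>.
  Dividing by \<open>c\<^sub>a\<^sup>2 d\<^sub>b\<^sup>2\<close> and summing, the normalisation of \<open>\<phi>\<close> becomes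
  \<open>p/2 (x \<alpha> + (1 - x) \<beta>) = (c\<^sub>0 c\<^sub>1 d\<^sub>0 d\<^sub>1)\<^sup>2\<close> with \<open>2\<alpha> = 1 + cos 2\<theta> cos 2\<eta>\<close> and
  \<open>2\<beta> = 1 - cos 2\<theta> cos 2\<eta>\<close>. Since \<open>\<beta> \<le> x \<alpha> + (1 - x) \<beta> \<le> \<alpha>\<close> for \<open>\<theta>, \<eta> \<le> \<pi>/4\<close>, the
  two bounds on \<open>p\<close> follow.\<close>

definition schmidt_coeff :: "real \<Rightarrow> nat \<Rightarrow> real" where
  "schmidt_coeff l i = (if i = 0 then cos l else sin l)"

lemma post_AB_eq:
  assumes "a < 2" "b < 2"
  shows "post_AB th et \<phi> a b = cnj (\<phi> a b) * of_real (schmidt_coeff th a * schmidt_coeff et b)"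
  using assms
  by (auto simp: post_AB_def state4_def Phi_def schmidt_coeff_def numeral_2_eq_2 lessThan_Suc
      less_Suc_eq)

lemma norm_post_AB_squared:
  assumes "a < 2" "b < 2"
  shows "(cmod (post_AB th et \<phi> a b))\<^sup>2 = (cmod (\<phi> a b))\<^sup>2 * (schmidt_coeff th a * schmidt_coeff et b)\<^sup>2"
  by (simp add: post_AB_eq[OF assms] norm_mult power_mult_distrib)

lemma max_ent_outcome_norms:
  assumes "max_ent_outcome th et \<phi>"
  obtains U where "unitary2 U"
    "\<And>a b. a < 2 \<Longrightarrow> b < 2 \<Longrightarrow>
       (cmod (post_AB th et \<phi> a b))\<^sup>2 = prob th et \<phi> / 2 * (cmod (U a b))\<^sup>2"
proof -
  let ?p = "prob th et \<phi>"
  from assms obtain U where "?p > 0" "unitary2 U" and U: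
    "\<And>a b. a < 2 \<Longrightarrow> b < 2 \<Longrightarrow>
       post_AB th et \<phi> a b / of_real (sqrt ?p) = U a b / of_real (sqrt 2)"
    unfolding max_ent_outcome_def by blast
  have "(cmod (post_AB th et \<phi> a b))\<^sup>2 = ?p / 2 * (cmod (U a b))\<^sup>2" if "a < 2" "b < 2" for a b
  proof -
    have "post_AB th et \<phi> a b = of_real (sqrt ?p) * U a b / of_real (sqrt 2)"
      using U[OF that] \<open>?p > 0\<close> by (simp add: field_simps)
    then have "cmod (post_AB th et \<phi> a b) = sqrt ?p * cmod (U a b) / sqrt 2"
      using \<open>?p > 0\<close> by (simp add: norm_mult norm_divide)
    then show ?thesis
      using \<open>?p > 0\<close> by (simp add: power_mult_distrib power_divide)
  qed
  with \<open>unitary2 U\<close> show thesis by (rule that)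
qed

lemma unitary2_norms:
  assumes "unitary2 U"
  shows "(cmod (U 0 0))\<^sup>2 + (cmod (U 0 1))\<^sup>2 = 1"
    and "(cmod (U 1 0))\<^sup>2 = (cmod (U 0 1))\<^sup>2"
    and "(cmod (U 1 1))\<^sup>2 = (cmod (U 0 0))\<^sup>2"
proof -
  have entry: "(\<Sum>j<2. U i j * cnj (U k j)) = (if i = k then 1 else 0)" if "i < 2" "k < 2" for i k
    using assms that unfolding unitary2_def by blast
  have rows: "U 0 0 * cnj (U 0 0) + U 0 1 * cnj (U 0 1) = 1"
    "U 1 0 * cnj (U 1 0) + U 1 1 * cnj (U 1 1) = 1"
    "U 0 0 * cnj (U 1 0) = - (U 0 1 * cnj (U 1 1))"
    using entry[of 0 0] entry[of 1 1] entry[of 0 1] by (simp_all add: numeral_2_eq_2 eq_neg_iff_add_eq_0)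
  have norm_rows: "(cmod (U i 0))\<^sup>2 + (cmod (U i 1))\<^sup>2 = 1" if "i \<in> {0, 1}" for i
  proof -
    have "complex_of_real ((cmod (U i 0))\<^sup>2 + (cmod (U i 1))\<^sup>2)
        = U i 0 * cnj (U i 0) + U i 1 * cnj (U i 1)"
      by (simp only: of_real_add complex_norm_square)
    also have "\<dots> = 1"
      using rows that by auto
    finally show ?thesis by (metis of_real_eq_1_iff)
  qed
  have orth: "(cmod (U 0 0))\<^sup>2 * (cmod (U 1 0))\<^sup>2 = (cmod (U 0 1))\<^sup>2 * (cmod (U 1 1))\<^sup>2"
    using arg_cong[OF rows(3), of "\<lambda>z. (cmod z)\<^sup>2"] by (simp add: norm_mult power_mult_distrib)
  have swap: "c = b \<and> d = a" if "a + b = 1" "c + d = 1" "a * c = b * d" for a b c d :: real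
  proof -
    have "a * c = (1 - a) * (1 - c)" using that by (metis add_diff_cancel_left')
    then have "a + c = 1" by (simp add: algebra_simps)
    with that(1,2) show ?thesis by linarith
  qed
  show "(cmod (U 0 0))\<^sup>2 + (cmod (U 0 1))\<^sup>2 = 1"
    using norm_rows[of 0] by simp
  show "(cmod (U 1 0))\<^sup>2 = (cmod (U 0 1))\<^sup>2" "(cmod (U 1 1))\<^sup>2 = (cmod (U 0 0))\<^sup>2"
    using swap[OF norm_rows[of 0] norm_rows[of 1] orth] by simp_all
qed

lemma cos_double_mult_eq:
  fixes a b :: real
  shows "(cos a * cos b)\<^sup>2 + (sin a * sin b)\<^sup>2 = (1 + cos (2*a) * cos (2*b)) / 2"
    and "(cos a * sin b)\<^sup>2 + (sin a * cos b)\<^sup>2 = (1 - cos (2*a) * cos (2*b)) / 2"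
  unfolding cos_double_cos by (simp_all add: sin_squared_eq power_mult_distrib algebra_simps)

lemma max_ent_outcome_prob_balance:
  assumes "unit_vec2 \<phi>" "max_ent_outcome th et \<phi>"
  obtains x :: real where "0 \<le> x" "x \<le> 1"
    "prob th et \<phi> * (x * (1 + cos (2*th) * cos (2*et)) + (1 - x) * (1 - cos (2*th) * cos (2*et)))
     = (sin (2*th))\<^sup>2 * (sin (2*et))\<^sup>2 / 4"
proof -
  obtain U where "unitary2 U" and post:
    "\<And>a b. a < 2 \<Longrightarrow> b < 2 \<Longrightarrow>
       (cmod (post_AB th et \<phi> a b))\<^sup>2 = prob th et \<phi> / 2 * (cmod (U a b))\<^sup>2"
    using max_ent_outcome_norms[OF assms(2)] by blast
  define x where "x = (cmod (U 0 0))\<^sup>2"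
  let ?k = "cos (2*th) * cos (2*et)"
  let ?q = "prob th et \<phi> / 2"
  let ?n = "\<lambda>a b. (cmod (\<phi> a b))\<^sup>2"
  let ?w = "\<lambda>a b. (schmidt_coeff th a * schmidt_coeff et b)\<^sup>2"
  have weighted: "?n a b * ?w a b = ?q * (cmod (U a b))\<^sup>2" if "a < 2" "b < 2" for a b
    using norm_post_AB_squared[OF that] post[OF that] by simp
  note U_norms = unitary2_norms[OF \<open>unitary2 U\<close>]
  have weighted_x: "?n 0 0 * ?w 0 0 = ?q * x" "?n 0 1 * ?w 0 1 = ?q * (1 - x)"
    "?n 1 0 * ?w 1 0 = ?q * (1 - x)" "?n 1 1 * ?w 1 1 = ?q * x"
    using weighted[of 0 0] weighted[of 0 1] weighted[of 1 0] weighted[of 1 1] U_norms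
    unfolding x_def by (simp_all add: eq_diff_eq)
  have "0 \<le> x" "x \<le> 1"
    using U_norms(1) unfolding x_def by (simp, metis le_add_same_cancel1 zero_le_power2)
  have unit: "?n 0 0 + ?n 0 1 + ?n 1 0 + ?n 1 1 = 1"
    using assms(1) unfolding unit_vec2_def by (simp add: numeral_2_eq_2 add.assoc)
  have trig: "?w 0 0 + ?w 1 1 = (1 + ?k) / 2" "?w 0 1 + ?w 1 0 = (1 - ?k) / 2"
    by (simp_all add: schmidt_coeff_def cos_double_mult_eq)
  have "(sin (2*th))\<^sup>2 * (sin (2*et))\<^sup>2 / 16 = ?w 0 0 * ?w 1 1"
    by (simp add: schmidt_coeff_def sin_double power_mult_distrib)
  \<comment> \<open>\<open>w\<^sub>0\<^sub>0 w\<^sub>1\<^sub>1 = w\<^sub>0\<^sub>1 w\<^sub>1\<^sub>0\<close>, so multiplying the normalisation by it clears every \<open>1/w\<^sub>a\<^sub>b\<close>\<close>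
  also have "\<dots> = ?w 1 1 * (?n 0 0 * ?w 0 0) + ?w 1 0 * (?n 0 1 * ?w 0 1)
      + ?w 0 1 * (?n 1 0 * ?w 1 0) + ?w 0 0 * (?n 1 1 * ?w 1 1)"
    using arg_cong[OF unit, of "\<lambda>t. ?w 0 0 * ?w 1 1 * t"]
    by (simp add: schmidt_coeff_def algebra_simps power_mult_distrib)
  also have "\<dots> = ?q * (x * (?w 0 0 + ?w 1 1) + (1 - x) * (?w 0 1 + ?w 1 0))"
    unfolding weighted_x by (simp add: algebra_simps add_divide_distrib diff_divide_distrib)
  also have "\<dots> = ?q * (x * ((1 + ?k) / 2) + (1 - x) * ((1 - ?k) / 2))"
    by (simp only: trig)
  finally show thesis
    by (intro that[OF \<open>0 \<le> x\<close> \<open>x \<le> 1\<close>]) (simp add: field_simps)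
qed

lemma convex_combination_bounds:
  fixes \<alpha> \<beta> x p c :: real
  assumes "0 < \<beta>" "\<beta> \<le> \<alpha>" "0 \<le> x" "x \<le> 1" "0 \<le> p" "p * (x * \<alpha> + (1 - x) * \<beta>) = c"
  shows "c / \<alpha> \<le> p \<and> p \<le> c / \<beta>"
proof -
  have "x * \<beta> \<le> x * \<alpha>" "(1 - x) * \<beta> \<le> (1 - x) * \<alpha>"
    using assms(2-4) by (simp_all add: mult_left_mono)
  then have "\<beta> \<le> x * \<alpha> + (1 - x) * \<beta>" "x * \<alpha> + (1 - x) * \<beta> \<le> \<alpha>"
    by (simp_all add: algebra_simps)
  then have "p * \<beta> \<le> c" "c \<le> p * \<alpha>"
    using assms(5,6) mult_left_mono by blast+
  then show ?thesis
    using assms(1,2) by (simp add: pos_divide_le_eq pos_le_divide_eq mult.commute)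
qed

theorem lemma3:
  fixes \<theta> \<eta> :: real and \<phi> :: "nat \<Rightarrow> nat \<Rightarrow> complex"
  assumes "0 < \<theta>" "\<theta> \<le> pi / 4" "0 < \<eta>" "\<eta> \<le> pi / 4"
    and "unit_vec2 \<phi>"
    and "max_ent_outcome \<theta> \<eta> \<phi>"
  shows "(sin (2*\<theta>))\<^sup>2 * (sin (2*\<eta>))\<^sup>2 / (4 * (1 + cos (2*\<theta>) * cos (2*\<eta>))) \<le> prob \<theta> \<eta> \<phi>
       \<and> prob \<theta> \<eta> \<phi> \<le> (sin (2*\<theta>))\<^sup>2 * (sin (2*\<eta>))\<^sup>2 / (4 * (1 - cos (2*\<theta>) * cos (2*\<eta>)))"
proof -
  let ?k = "cos (2*\<theta>) * cos (2*\<eta>)"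
  have "0 \<le> cos (2*\<theta>)" "cos (2*\<theta>) < 1" "0 \<le> cos (2*\<eta>)" "cos (2*\<eta>) < 1"
    using assms(1-4) pi_less_4 by (auto intro!: cos_ge_zero cos_double_less_one)
  then have "0 \<le> ?k" "?k < 1"
    using mult_left_le[of "cos (2*\<eta>)" "cos (2*\<theta>)"] by auto
  obtain x where "0 \<le> x" "x \<le> 1" and balance:
    "prob \<theta> \<eta> \<phi> * (x * (1 + ?k) + (1 - x) * (1 - ?k)) = (sin (2*\<theta>))\<^sup>2 * (sin (2*\<eta>))\<^sup>2 / 4"
    by (rule max_ent_outcome_prob_balance[OF assms(5,6)])
  have "0 \<le> prob \<theta> \<eta> \<phi>"
    using assms(6) unfolding max_ent_outcome_def by simp
  from convex_combination_bounds[OF _ _ \<open>0 \<le> x\<close> \<open>x \<le> 1\<close> this balance]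
  show ?thesis
    using \<open>0 \<le> ?k\<close> \<open>?k < 1\<close> by (simp add: divide_divide_eq_left)
qed

end
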